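(* Let $G$ be a finite digraph with blocks $B_1,\dots,B_k$, and suppose $G$ has exactly $t$ cut-vertices $v^c_1,\dots,v^c_t$, with cut-indices $T(1),T(2),\dots,T(t)$ respectively. Then the number of $\mathcal{B}$-partitions of $G$ is $$\prod_{i=1}^{t} T(i).$$
   Context: A digraph $G=(V(G),E(G))$ consists of a finite vertex set $V(G)$ and an edge set $E(G)\subseteq V(G)\times V(G)$ (loops $(u,u)$ are allowed). A subdigraph $H$ of $G$ has $V(H)\subseteq V(G)$ and $E(H)\subseteq E(G)$; it is induced if whenever $u,v\in V(H)$ and $(u,v)\in E(G)$ then $(u,v)\in E(H)$. A digraph with empty vertex set is called a null graph. A path between $v_1$ and $v_k$ is a sequence of distinct vertices $v_1,\dots,v_k$ such that for each $i$, $(v_i,v_{i+1})\in E(G)$ or $(v_{i+1},v_i)\in E(G)$; $G$ is connected if any two distinct vertices are joined by a path, and a component is a maximal connected subdigraph. A cut-vertex of $G$ is a vertex whose removal increases the number of components. A block of $G$ is a maximal connected subdigraph of $G$ that has no cut-vertex (of itself). The cut-index of a cut-vertex $v$ of $G$ is the number of blocks of $G$ containing $v$. If $G$ has blocks $B_1,\dots,B_k$, a $\mathcal{B}$-partition of $G$ is a $k$-tuple $(\hat B_1,\dots,\hat B_k)$ of pairwise vertex-disjoint induced subdigraphs of $G$ whose vertex sets together cover $V(G)$, such that $\hat B_i$ is an (induced) subdigraph of $B_i$ for each $i=1,\dots,k$; some $\hat B_i$ may be null graphs. *)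

theory Defs
  imports "HOL-Library.FuncSet"
begin

text \<open>A digraph is a pair (vertex set, edge set); loops allowed.\<close>
type_synonym 'a dgraph = "'a set \<times> ('a \<times> 'a) set"

definition wf_dgraph :: "'a dgraph \<Rightarrow> bool" where
  "wf_dgraph G \<longleftrightarrow> snd G \<subseteq> fst G \<times> fst G"

definition subdigraph :: "'a dgraph \<Rightarrow> 'a dgraph \<Rightarrow> bool" where
  "subdigraph H G \<longleftrightarrow> fst H \<subseteq> fst G \<and> snd H \<subseteq> snd G \<and> wf_dgraph H"

definition induced_subdigraph :: "'a dgraph \<Rightarrow> 'a dgraph \<Rightarrow> bool" where
  "induced_subdigraph H G \<longleftrightarrow> subdigraph H G \<and>
     (\<forall>u\<in>fst H. \<forall>v\<in>fst H. (u, v) \<in> snd G \<longrightarrow> (u, v) \<in> snd H)"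

definition is_path :: "'a dgraph \<Rightarrow> 'a list \<Rightarrow> bool" where
  "is_path H xs \<longleftrightarrow> xs \<noteq> [] \<and> distinct xs \<and> set xs \<subseteq> fst H \<and>
     (\<forall>i. Suc i < length xs \<longrightarrow>
        (xs ! i, xs ! Suc i) \<in> snd H \<or> (xs ! Suc i, xs ! i) \<in> snd H)"

definition connected_dg :: "'a dgraph \<Rightarrow> bool" where
  "connected_dg H \<longleftrightarrow> (\<forall>u\<in>fst H. \<forall>v\<in>fst H. u \<noteq> v \<longrightarrow>
     (\<exists>xs. is_path H xs \<and> hd xs = u \<and> last xs = v))"

definition components :: "'a dgraph \<Rightarrow> 'a dgraph set" where
  "components H = {C. subdigraph C H \<and> connected_dg C \<and>
     (\<forall>C'. subdigraph C' H \<and> connected_dg C' \<and> subdigraph C C' \<longrightarrow> C' = C)}"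

definition delete_vertex :: "'a \<Rightarrow> 'a dgraph \<Rightarrow> 'a dgraph" where
  "delete_vertex v H = (fst H - {v}, {e \<in> snd H. fst e \<noteq> v \<and> snd e \<noteq> v})"

definition is_cut_vertex :: "'a dgraph \<Rightarrow> 'a \<Rightarrow> bool" where
  "is_cut_vertex H v \<longleftrightarrow> v \<in> fst H \<and>
     card (components (delete_vertex v H)) > card (components H)"

definition cut_vertices :: "'a dgraph \<Rightarrow> 'a set" where
  "cut_vertices H = {v. is_cut_vertex H v}"

definition no_cut_vertex :: "'a dgraph \<Rightarrow> bool" where
  "no_cut_vertex H \<longleftrightarrow> (\<forall>v. \<not> is_cut_vertex H v)"

definition blocks :: "'a dgraph \<Rightarrow> 'a dgraph set" where
  "blocks G = {B. subdigraph B G \<and> connected_dg B \<and> no_cut_vertex B \<and>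
     (\<forall>B'. subdigraph B' G \<and> connected_dg B' \<and> no_cut_vertex B' \<and> subdigraph B B'
        \<longrightarrow> B' = B)}"

definition cut_index :: "'a dgraph \<Rightarrow> 'a \<Rightarrow> nat" where
  "cut_index G v = card {B \<in> blocks G. v \<in> fst B}"

text \<open>A B-partition, indexed by the blocks (the k-tuple (B1^,...,Bk^) is a function on
  the set of blocks, extensional outside it).\<close>
definition is_B_partition :: "'a dgraph \<Rightarrow> ('a dgraph \<Rightarrow> 'a dgraph) \<Rightarrow> bool" where
  "is_B_partition G P \<longleftrightarrow> P \<in> extensional (blocks G) \<and>
     (\<forall>B\<in>blocks G. induced_subdigraph (P B) G \<and> induced_subdigraph (P B) B) \<and>
     (\<forall>B\<in>blocks G. \<forall>B'\<in>blocks G. B \<noteq> B' \<longrightarrow> fst (P B) \<inter> fst (P B') = {}) \<and>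
     (\<Union>B\<in>blocks G. fst (P B)) = fst G"

end

theory Submission
  imports Defs "HOL-Library.Product_Order" "HOL-Library.Disjoint_Sets"
begin

(* Blocks are induced subgraphs, so a B-partition is determined by its vertex sets, i.e. by
   choosing for every vertex one of the blocks containing it; the number of B-partitions is
   therefore the product over all vertices of the number of blocks through them.  A vertex that
   is not a cut-vertex lies in exactly one block: were it in two blocks B1 and B2, a path from
   B1 to B2 avoiding it (which exists, since deleting it disconnects nothing) would glue B1, B2
   and the path into a larger subgraph without cut-vertex, contradicting maximality.  Hence only
   the cut-vertices contribute factors different from 1. *)

section \<open>Connectivity via reachability\<close>

definition adj :: "'a dgraph \<Rightarrow> ('a \<times> 'a) set" where
  "adj H = snd H \<union> (snd H)\<inverse>"

definition conn :: "'a dgraph \<Rightarrow> bool" where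
  "conn H \<longleftrightarrow> fst H \<times> fst H \<subseteq> (adj H)\<^sup>*"

definition induced_on :: "'a dgraph \<Rightarrow> 'a set \<Rightarrow> 'a dgraph" where
  "induced_on G S = (S, {e \<in> snd G. fst e \<in> S \<and> snd e \<in> S})"

lemma adj_rtrancl_sym: "(a, b) \<in> (adj H)\<^sup>* \<Longrightarrow> (b, a) \<in> (adj H)\<^sup>*"
  by (rule symD[OF sym_rtrancl]) (auto simp: adj_def sym_def)

lemma adj_rtrancl_mono: "snd H \<subseteq> snd K \<Longrightarrow> (adj H)\<^sup>* \<subseteq> (adj K)\<^sup>*"
  unfolding adj_def by (rule rtrancl_mono) auto

lemma adj_subset_verts: "wf_dgraph H \<Longrightarrow> adj H \<subseteq> fst H \<times> fst H"
  unfolding adj_def wf_dgraph_def by auto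

lemma adj_rtrancl_in_verts:
  assumes "wf_dgraph H" "(a, b) \<in> (adj H)\<^sup>*" "a \<in> fst H"
  shows "b \<in> fst H"
  using assms(2,3) by induction (use adj_subset_verts[OF assms(1)] in auto)

lemma fst_induced_on [simp]: "fst (induced_on G S) = S"
  unfolding induced_on_def by simp

lemma adj_induced_on: "adj (induced_on G S) = adj G \<inter> S \<times> S"
  unfolding adj_def induced_on_def by auto

lemma induced_on_mono: "S \<subseteq> T \<Longrightarrow> induced_on G S \<le> induced_on G T"
  unfolding induced_on_def by auto

lemma subdigraph_induced_on: "S \<subseteq> fst G \<Longrightarrow> subdigraph (induced_on G S) G"
  unfolding subdigraph_def wf_dgraph_def induced_on_def by auto

lemma fst_delete_vertex [simp]: "fst (delete_vertex w H) = fst H - {w}"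
  unfolding delete_vertex_def by simp

lemma adj_delete_vertex: "adj (delete_vertex w H) = adj H \<inter> (- {w}) \<times> (- {w})"
  unfolding adj_def delete_vertex_def by auto

lemma snd_delete_vertex_mono: "snd H \<subseteq> snd K \<Longrightarrow> snd (delete_vertex w H) \<subseteq> snd (delete_vertex w K)"
  unfolding delete_vertex_def by auto

lemma wf_delete_vertex: "wf_dgraph H \<Longrightarrow> wf_dgraph (delete_vertex w H)"
  unfolding wf_dgraph_def delete_vertex_def by auto

lemma delete_vertex_notin: "wf_dgraph H \<Longrightarrow> w \<notin> fst H \<Longrightarrow> delete_vertex w H = H"
  unfolding wf_dgraph_def delete_vertex_def by (cases H) auto

lemma delete_vertex_rtrancl_subset: "(adj (delete_vertex w H))\<^sup>* \<subseteq> (adj H)\<^sup>*"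
  by (rule rtrancl_mono) (auto simp: adj_delete_vertex)

lemma connI:
  assumes "\<And>u. u \<in> fst H \<Longrightarrow> (h, u) \<in> (adj H)\<^sup>*"
  shows "conn H"
  unfolding conn_def using assms by (auto intro: rtrancl_trans adj_rtrancl_sym)

lemma connD: "conn H \<Longrightarrow> a \<in> fst H \<Longrightarrow> b \<in> fst H \<Longrightarrow> (a, b) \<in> (adj H)\<^sup>*"
  unfolding conn_def by blast

lemma conn_more_edges: "conn H \<Longrightarrow> fst K = fst H \<Longrightarrow> snd H \<subseteq> snd K \<Longrightarrow> conn K"
  unfolding conn_def using adj_rtrancl_mono by blast

lemma finite_edges: "wf_dgraph G \<Longrightarrow> finite (fst G) \<Longrightarrow> finite (snd G)"
  unfolding wf_dgraph_def by (auto intro: finite_subset)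

lemma is_path_iff_successively:
  "is_path H xs \<longleftrightarrow>
     xs \<noteq> [] \<and> distinct xs \<and> set xs \<subseteq> fst H \<and> successively (\<lambda>a b. (a, b) \<in> adj H) xs"
  unfolding is_path_def successively_conv_nth adj_def by auto

lemma successively_imp_rtrancl:
  "successively (\<lambda>a b. (a, b) \<in> R) xs \<Longrightarrow> xs \<noteq> [] \<Longrightarrow> (hd xs, last xs) \<in> R\<^sup>*"
  by (induction xs) (auto simp: successively_Cons intro: converse_rtrancl_into_rtrancl)

lemma successively_reaches_an_end:
  assumes "successively P xs" "distinct xs" "u \<in> set xs" "u \<noteq> w"
    and "\<And>a b. a \<in> set xs \<Longrightarrow> b \<in> set xs \<Longrightarrow> P a b \<Longrightarrow> a \<noteq> w \<Longrightarrow> b \<noteq> w \<Longrightarrow> (a, b) \<in> R"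
  shows "(hd xs, u) \<in> R\<^sup>* \<or> (u, last xs) \<in> R\<^sup>*"
proof -
  obtain ys zs where xs: "xs = ys @ u # zs"
    using split_list[OF assms(3)] by blast
  have R: "successively (\<lambda>a b. (a, b) \<in> R) as"
    if "successively P as" "set as \<subseteq> set xs" "w \<notin> set as" for as
    using that(1) by (rule successively_mono) (use that(2,3) assms(5) in blast)
  have "w \<notin> set (ys @ [u]) \<or> w \<notin> set (u # zs)"
    using assms(2,4) unfolding xs by auto
  then show ?thesis
  proof
    assume w: "w \<notin> set (ys @ [u])"
    have "successively P ((ys @ [u]) @ zs)"
      using assms(1) unfolding xs by simp
    then have "successively P (ys @ [u])"
      by (rule successively_append_iff[THEN iffD1, THEN conjunct1])
    then have "successively (\<lambda>a b. (a, b) \<in> R) (ys @ [u])"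
      by (rule R) (use w in \<open>auto simp: xs\<close>)
    from successively_imp_rtrancl[OF this] show ?thesis
      unfolding xs by (cases ys) auto
  next
    assume w: "w \<notin> set (u # zs)"
    have "successively P (u # zs)"
      using assms(1) unfolding xs by (rule successively_append_iff[THEN iffD1, THEN conjunct2, THEN conjunct1])
    then have "successively (\<lambda>a b. (a, b) \<in> R) (u # zs)"
      by (rule R) (use w in \<open>auto simp: xs\<close>)
    from successively_imp_rtrancl[OF this] show ?thesis
      unfolding xs by simp
  qed
qed

lemma path_imp_rtrancl: "is_path H xs \<Longrightarrow> (hd xs, last xs) \<in> (adj H)\<^sup>*"
  unfolding is_path_iff_successively using successively_imp_rtrancl by blast

lemma rtrancl_imp_path:
  assumes "(u, v) \<in> (adj H)\<^sup>*" "wf_dgraph H" "u \<in> fst H"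
  shows "\<exists>xs. is_path H xs \<and> hd xs = u \<and> last xs = v"
  using assms(1)
proof induction
  case base
  show ?case
    using assms(3) by (intro exI[of _ "[u]"]) (simp add: is_path_iff_successively)
next
  case (step z w)
  then obtain xs where xs: "is_path H xs" "hd xs = u" "last xs = z"
    by blast
  show ?case
  proof (cases "w \<in> set xs")
    case True
    then obtain ys zs where split: "xs = (ys @ [w]) @ zs"
      by (auto dest: split_list)
    have "successively (\<lambda>a b. (a, b) \<in> adj H) ((ys @ [w]) @ zs)"
      using xs(1) unfolding split is_path_iff_successively by blast
    then have "successively (\<lambda>a b. (a, b) \<in> adj H) (ys @ [w])"
      by (rule successively_append_iff[THEN iffD1, THEN conjunct1])
    then have "is_path H (ys @ [w]) \<and> hd (ys @ [w]) = u"
      using xs(1,2) unfolding split is_path_iff_successively by (cases ys) auto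
    then show ?thesis
      by (intro exI[of _ "ys @ [w]"]) simp
  next
    case False
    have "w \<in> fst H"
      using adj_subset_verts[OF assms(2)] step.hyps(2) by auto
    then have "is_path H (xs @ [w])"
      using xs False step.hyps(2) by (auto simp: is_path_iff_successively successively_append_iff)
    then show ?thesis
      using xs(1,2) by (intro exI[of _ "xs @ [w]"]) (simp add: is_path_def)
  qed
qed

lemma connected_dg_iff_conn:
  assumes "wf_dgraph H"
  shows "connected_dg H \<longleftrightarrow> conn H"
proof
  assume H: "connected_dg H"
  have "(a, b) \<in> (adj H)\<^sup>*" if ab: "a \<in> fst H" "b \<in> fst H" "a \<noteq> b" for a b
  proof -
    obtain xs where "is_path H xs" "hd xs = a" "last xs = b"
      using H ab unfolding connected_dg_def by blast
    then show ?thesis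
      using path_imp_rtrancl by blast
  qed
  then show "conn H"
    unfolding conn_def by blast
next
  assume H: "conn H"
  show "connected_dg H"
    unfolding connected_dg_def
  proof (intro ballI impI)
    fix a b assume "a \<in> fst H" "b \<in> fst H"
    then show "\<exists>xs. is_path H xs \<and> hd xs = a \<and> last xs = b"
      using rtrancl_imp_path[OF connD[OF H] assms] by blast
  qed
qed

section \<open>Components and cut-vertices\<close>

lemma subdigraph_antisym: "subdigraph A B \<Longrightarrow> subdigraph B A \<Longrightarrow> A = B"
  unfolding subdigraph_def by (auto simp: prod_eq_iff)

lemma wf_subdigraph: "subdigraph H G \<Longrightarrow> wf_dgraph H"
  unfolding subdigraph_def by simp

lemma componentsD: "C \<in> components H \<Longrightarrow> subdigraph C H" "C \<in> components H \<Longrightarrow> connected_dg C"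
  unfolding components_def by auto

lemma component_maximal:
  "C \<in> components H \<Longrightarrow> subdigraph C' H \<Longrightarrow> connected_dg C' \<Longrightarrow> subdigraph C C' \<Longrightarrow> C' = C"
  unfolding components_def by blast

definition component_of :: "'a dgraph \<Rightarrow> 'a \<Rightarrow> 'a dgraph" where
  "component_of H x = induced_on H ((adj H)\<^sup>* `` {x})"

lemma in_component_of: "x \<in> fst (component_of H x)"
  unfolding component_of_def induced_on_def by simp

lemma component_of_eq:
  assumes "(x, y) \<in> (adj H)\<^sup>*"
  shows "component_of H x = component_of H y"
proof -
  have "(x, z) \<in> (adj H)\<^sup>* \<longleftrightarrow> (y, z) \<in> (adj H)\<^sup>*" for z
    using assms adj_rtrancl_sym[OF assms] rtrancl_trans by metis
  then show ?thesis
    unfolding component_of_def by (simp add: Image_singleton)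
qed

lemma conn_component_of: "conn (component_of H x)"
proof (rule connI)
  fix u assume "u \<in> fst (component_of H x)"
  then have "(x, u) \<in> (adj H)\<^sup>*"
    unfolding component_of_def induced_on_def by simp
  then show "(x, u) \<in> (adj (component_of H x))\<^sup>*"
  proof induction
    case (step z z')
    then have "(z, z') \<in> adj (component_of H x)"
      unfolding component_of_def adj_induced_on by (auto intro: rtrancl_into_rtrancl)
    then show ?case
      using step.IH by simp
  qed simp
qed

lemma connected_subdigraph_le_component_of:
  assumes "subdigraph C H" "conn C" "x \<in> fst C"
  shows "subdigraph C (component_of H x)"
proof -
  have C: "wf_dgraph C" "snd C \<subseteq> snd H"
    using assms(1) unfolding subdigraph_def by auto
  have "(x, u) \<in> (adj H)\<^sup>*" if "u \<in> fst C" for u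
    using connD[OF assms(2,3) that] adj_rtrancl_mono[OF C(2)] by blast
  then show ?thesis
    using C unfolding subdigraph_def wf_dgraph_def component_of_def induced_on_def by auto
qed

lemma component_of_in_components:
  assumes "wf_dgraph H" "x \<in> fst H"
  shows "component_of H x \<in> components H"
proof -
  have sub: "subdigraph (component_of H x) H"
    unfolding component_of_def
    by (rule subdigraph_induced_on) (use adj_rtrancl_in_verts[OF assms(1) _ assms(2)] in auto)
  have "connected_dg (component_of H x)"
    using connected_dg_iff_conn[OF wf_subdigraph[OF sub]] conn_component_of by simp
  moreover have "C' = component_of H x"
    if C': "subdigraph C' H" "connected_dg C'" "subdigraph (component_of H x) C'" for C'
  proof -
    have "x \<in> fst C'"
      using C'(3) in_component_of unfolding subdigraph_def by fast
    moreover have "conn C'"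
      using C'(2) connected_dg_iff_conn[OF wf_subdigraph[OF C'(1)]] by simp
    ultimately have "subdigraph C' (component_of H x)"
      by (intro connected_subdigraph_le_component_of[OF C'(1)])
    then show ?thesis
      using C'(3) by (rule subdigraph_antisym)
  qed
  ultimately show ?thesis
    unfolding components_def using sub by blast
qed

lemma component_eq_component_of:
  assumes "wf_dgraph H" "C \<in> components H" "x \<in> fst C"
  shows "C = component_of H x"
proof -
  note C = componentsD[OF assms(2)]
  have "x \<in> fst H"
    using C(1) assms(3) unfolding subdigraph_def by auto
  then have "component_of H x \<in> components H"
    by (rule component_of_in_components[OF assms(1)])
  moreover have "conn C"
    using C(2) connected_dg_iff_conn[OF wf_subdigraph[OF C(1)]] by simp
  then have "subdigraph C (component_of H x)"
    by (intro connected_subdigraph_le_component_of[OF C(1) _ assms(3)])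
  ultimately show ?thesis
    using component_maximal[OF assms(2)] componentsD by metis
qed

lemma component_eq_component_of_rtrancl:
  assumes "wf_dgraph H" "C \<in> components H" "y \<in> fst C" "(x, y) \<in> (adj H)\<^sup>*"
  shows "C = component_of H x"
  using component_eq_component_of[OF assms(1-3)] component_of_eq[OF assms(4)] by simp

lemma finite_components:
  assumes "wf_dgraph H" "finite (fst H)"
  shows "finite (components H)"
proof -
  have "components H \<subseteq> Pow (fst H) \<times> Pow (snd H)"
    by (auto simp: components_def subdigraph_def)
  then show ?thesis
    by (rule finite_subset) (simp add: finite_edges assms)
qed

lemma wf_dgraph_no_vertices: "wf_dgraph C \<Longrightarrow> fst C = {} \<Longrightarrow> C = ({}, {})"
  unfolding wf_dgraph_def by (cases C) auto

lemma components_no_vertices: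
  assumes "fst H = {}"
  shows "components H = {({}, {})}"
proof -
  have empty: "C = ({}, {})" if "subdigraph C H" for C
    using that assms by (intro wf_dgraph_no_vertices) (auto simp: subdigraph_def)
  have "({}, {}) \<in> components H"
    unfolding components_def
  proof (intro CollectI conjI allI impI)
    show "subdigraph ({}, {}) H" "connected_dg ({}, {})"
      by (simp_all add: subdigraph_def wf_dgraph_def connected_dg_def)
  qed (use empty in blast)
  moreover have "C = ({}, {})" if "C \<in> components H" for C
    using componentsD(1)[OF that] by (rule empty)
  ultimately show ?thesis
    by blast
qed

lemma component_has_vertex:
  assumes "wf_dgraph H" "C \<in> components H" "x \<in> fst H"
  shows "fst C \<noteq> {}"
proof
  assume "fst C = {}"
  then have "C = ({}, {})"
    by (rule wf_dgraph_no_vertices[OF wf_subdigraph[OF componentsD(1)[OF assms(2)]]])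
  then have "subdigraph C (component_of H x)"
    by (simp add: subdigraph_def wf_dgraph_def)
  then have "component_of H x = C"
    using component_maximal[OF assms(2) componentsD[OF component_of_in_components[OF assms(1,3)]]]
    by simp
  then show False
    using \<open>fst C = {}\<close> in_component_of[of x H] by simp
qed

lemma card_components_conn:
  assumes "wf_dgraph H" "conn H"
  shows "card (components H) = 1"
proof (cases "fst H = {}")
  case False
  then obtain x where x: "x \<in> fst H"
    by blast
  have "C = component_of H x" if C: "C \<in> components H" for C
  proof -
    obtain z where z: "z \<in> fst C"
      using component_has_vertex[OF assms(1) C x] by blast
    then have "z \<in> fst H"
      using componentsD(1)[OF C] unfolding subdigraph_def by auto
    then have "component_of H z = component_of H x"
      by (intro component_of_eq connD[OF assms(2) _ x])
    then show ?thesis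
      using component_eq_component_of[OF assms(1) C z] by simp
  qed
  then have "components H = {component_of H x}"
    using component_of_in_components[OF assms(1) x] by blast
  then show ?thesis
    by simp
qed (simp add: components_no_vertices)

lemma component_avoiding_in_components_delete_vertex:
  assumes "C \<in> components G" "v \<notin> fst C"
  shows "C \<in> components (delete_vertex v G)"
  unfolding components_def
proof (intro CollectI conjI allI impI)
  show "subdigraph C (delete_vertex v G)"
    using componentsD(1)[OF assms(1)] assms(2)
    unfolding subdigraph_def delete_vertex_def wf_dgraph_def by auto
  show "connected_dg C"
    by (rule componentsD(2)[OF assms(1)])
  fix C' assume C': "subdigraph C' (delete_vertex v G) \<and> connected_dg C' \<and> subdigraph C C'"
  then have "subdigraph C' G"
    unfolding subdigraph_def delete_vertex_def by auto
  then show "C' = C"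
    using component_maximal[OF assms(1)] C' by blast
qed

lemma separated_pair_reaches_separator:
  assumes "(x, y) \<in> (adj G)\<^sup>*" "(x, y) \<notin> (adj (delete_vertex v G))\<^sup>*"
  shows "(x, v) \<in> (adj G)\<^sup>*"
  using assms
proof induction
  case (step z y)
  show ?case
  proof (cases "(x, z) \<in> (adj (delete_vertex v G))\<^sup>*")
    case True
    have "z = v \<or> y = v"
    proof (rule ccontr)
      assume "\<not> (z = v \<or> y = v)"
      then have "(z, y) \<in> adj (delete_vertex v G)"
        using step.hyps(2) by (simp add: adj_delete_vertex)
      with True have "(x, y) \<in> (adj (delete_vertex v G))\<^sup>*"
        by (rule rtrancl_into_rtrancl)
      with step.prems show False
        by contradiction
    qed
    then show ?thesis
      using step.hyps(1) rtrancl_into_rtrancl[OF step.hyps] by auto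
  next
    case False
    then show ?thesis
      by (rule step.IH)
  qed
qed simp

lemma components_delete_vertex_supset:
  assumes wf: "wf_dgraph G" and xv: "(x, v) \<in> (adj G)\<^sup>*"
  shows "components G - {component_of G x} \<subseteq> components (delete_vertex v G)"
proof
  fix D assume D: "D \<in> components G - {component_of G x}"
  have "v \<notin> fst D"
  proof
    assume "v \<in> fst D"
    with D have "D = component_of G x"
      by (intro component_eq_component_of_rtrancl[OF wf _ _ xv]) simp_all
    with D show False
      by simp
  qed
  with D show "D \<in> components (delete_vertex v G)"
    by (intro component_avoiding_in_components_delete_vertex) simp_all
qed

(* G - v keeps every component of G except the one through x, which is replaced by at least the
   two distinct components of x and y. *)
lemma separating_vertex_is_cut_vertex:
  assumes wf: "wf_dgraph G" and fin: "finite (fst G)"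
    and x: "x \<in> fst G" "x \<noteq> v" and y: "y \<noteq> v"
    and xy: "(x, y) \<in> (adj G)\<^sup>*" and sep: "(x, y) \<notin> (adj (delete_vertex v G))\<^sup>*"
  shows "is_cut_vertex G v"
proof -
  let ?G' = "delete_vertex v G"
  let ?old = "components G - {component_of G x}"
  let ?Cx = "component_of ?G' x" and ?Cy = "component_of ?G' y"
  have xv: "(x, v) \<in> (adj G)\<^sup>*"
    using xy sep by (rule separated_pair_reaches_separator)
  have v: "v \<in> fst G" and "y \<in> fst G"
    using adj_rtrancl_in_verts[OF wf _ x(1)] xv xy by auto
  then have new: "insert ?Cx (insert ?Cy ?old) \<subseteq> components ?G'"
    using components_delete_vertex_supset[OF wf xv] x y
      component_of_in_components[OF wf_delete_vertex[OF wf]] by auto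
  have not_old: "C \<notin> ?old" if "z \<in> fst C" "(x, z) \<in> (adj G)\<^sup>*" for C z
  proof
    assume C: "C \<in> ?old"
    then have "C = component_of G x"
      by (intro component_eq_component_of_rtrancl[OF wf _ that]) simp
    with C show False
      by simp
  qed
  have "y \<notin> fst ?Cx"
    using sep unfolding component_of_def induced_on_def by simp
  then have "?Cx \<noteq> ?Cy"
    using in_component_of[of y ?G'] by auto
  moreover note not_old[OF in_component_of[of x ?G'] rtrancl.rtrancl_refl]
    not_old[OF in_component_of[of y ?G'] xy]
  moreover have "component_of G x \<in> components G" "finite (components G)"
    using component_of_in_components[OF wf x(1)] finite_components[OF wf fin] .
  ultimately have "card (components G) + 1 = card (insert ?Cx (insert ?Cy ?old))"
    using card_gt_0_iff[of "components G"] by auto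
  also have "\<dots> \<le> card (components ?G')"
    using new finite_components[OF wf_delete_vertex[OF wf]] fin by (simp add: card_mono)
  finally show ?thesis
    unfolding is_cut_vertex_def using v by simp
qed

lemma rtrancl_delete_non_cut_vertex:
  assumes "wf_dgraph G" "finite (fst G)" "\<not> is_cut_vertex G v"
    and "x \<in> fst G" "x \<noteq> v" "y \<noteq> v" "(x, y) \<in> (adj G)\<^sup>*"
  shows "(x, y) \<in> (adj (delete_vertex v G))\<^sup>*"
  using separating_vertex_is_cut_vertex[OF assms(1,2,4,5,6,7)] assms(3) by blast

lemma no_cut_vertex_iff_conn_delete_vertex:
  assumes wf: "wf_dgraph H" and fin: "finite (fst H)" and H: "conn H"
  shows "no_cut_vertex H \<longleftrightarrow> (\<forall>w\<in>fst H. conn (delete_vertex w H))"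
proof
  assume nc: "no_cut_vertex H"
  have "(a, b) \<in> (adj (delete_vertex w H))\<^sup>*"
    if "a \<in> fst H - {w}" "b \<in> fst H - {w}" for a b w
    using that nc connD[OF H] rtrancl_delete_non_cut_vertex[OF wf fin]
    unfolding no_cut_vertex_def by simp
  then show "\<forall>w\<in>fst H. conn (delete_vertex w H)"
    unfolding conn_def by auto
next
  assume "\<forall>w\<in>fst H. conn (delete_vertex w H)"
  then have "card (components (delete_vertex w H)) = 1" if "w \<in> fst H" for w
    using card_components_conn[OF wf_delete_vertex[OF wf]] that by blast
  then show "no_cut_vertex H"
    using card_components_conn[OF wf H] unfolding no_cut_vertex_def is_cut_vertex_def by simp
qed

section \<open>Blocks\<close>

definition nonseparable :: "'a dgraph \<Rightarrow> bool" where
  "nonseparable H \<longleftrightarrow> conn H \<and> (\<forall>w\<in>fst H. conn (delete_vertex w H))"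

lemma nonseparable_conn_delete_vertex:
  assumes "wf_dgraph H" "nonseparable H"
  shows "conn (delete_vertex w H)"
proof (cases "w \<in> fst H")
  case False
  then show ?thesis
    using assms delete_vertex_notin[OF assms(1) False] unfolding nonseparable_def by simp
qed (use assms in \<open>simp add: nonseparable_def\<close>)

lemma nonseparable_more_edges:
  assumes "nonseparable H" "fst K = fst H" "snd H \<subseteq> snd K"
  shows "nonseparable K"
proof -
  have "conn (delete_vertex w K)" if "w \<in> fst K" for w
    using assms that snd_delete_vertex_mono[OF assms(3)] conn_more_edges[of "delete_vertex w H"]
    unfolding nonseparable_def by simp
  moreover have "conn K"
    using assms conn_more_edges unfolding nonseparable_def by blast
  ultimately show ?thesis
    unfolding nonseparable_def by blast
qed

lemma subdigraph_nonseparable_iff: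
  assumes "subdigraph H G" "finite (fst G)"
  shows "connected_dg H \<and> no_cut_vertex H \<longleftrightarrow> nonseparable H"
proof -
  have H: "wf_dgraph H" "finite (fst H)"
    using assms finite_subset unfolding subdigraph_def by auto
  show ?thesis
    using connected_dg_iff_conn[OF H(1)] no_cut_vertex_iff_conn_delete_vertex[OF H]
    unfolding nonseparable_def by blast
qed

lemma blockD:
  assumes "finite (fst G)" "B \<in> blocks G"
  shows "subdigraph B G" "nonseparable B"
  using assms(2) subdigraph_nonseparable_iff[OF _ assms(1), of B] unfolding blocks_def by auto

lemma block_maximal:
  assumes "finite (fst G)" "B \<in> blocks G"
    and "subdigraph B' G" "nonseparable B'" "B \<le> B'"
  shows "B' = B"
proof -
  have "subdigraph B B'"
    using assms(5) wf_subdigraph[OF blockD(1)[OF assms(1,2)]]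
    unfolding subdigraph_def less_eq_prod_def by simp
  then show ?thesis
    using assms subdigraph_nonseparable_iff[OF assms(3,1)] unfolding blocks_def by blast
qed

lemma blockI:
  assumes "finite (fst G)" "subdigraph B G" "nonseparable B"
    and "\<And>B'. subdigraph B' G \<Longrightarrow> nonseparable B' \<Longrightarrow> B \<le> B' \<Longrightarrow> B' = B"
  shows "B \<in> blocks G"
  unfolding blocks_def
proof (intro CollectI conjI allI impI)
  show "subdigraph B G"
    by (fact assms(2))
  show "connected_dg B" "no_cut_vertex B"
    using assms(2,3) subdigraph_nonseparable_iff[OF assms(2,1)] by simp_all
  fix B' assume B': "subdigraph B' G \<and> connected_dg B' \<and> no_cut_vertex B' \<and> subdigraph B B'"
  then have "nonseparable B'" "B \<le> B'"
    using subdigraph_nonseparable_iff[OF _ assms(1), of B']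
    unfolding subdigraph_def less_eq_prod_def by simp_all
  then show "B' = B"
    using B' assms(4) by simp
qed

lemma block_eq_induced_on:
  assumes "finite (fst G)" "B \<in> blocks G"
  shows "B = induced_on G (fst B)"
proof -
  note B = blockD[OF assms]
  have le: "B \<le> induced_on G (fst B)"
    using B(1) unfolding subdigraph_def wf_dgraph_def induced_on_def less_eq_prod_def by auto
  have "subdigraph (induced_on G (fst B)) G"
    using B(1) by (intro subdigraph_induced_on) (simp add: subdigraph_def)
  moreover have "nonseparable (induced_on G (fst B))"
    using B(2) by (rule nonseparable_more_edges) (use le in \<open>auto simp: induced_on_def less_eq_prod_def\<close>)
  ultimately show ?thesis
    using block_maximal[OF assms _ _ le] by simp
qed

lemma block_exists:
  assumes "wf_dgraph G" "finite (fst G)" "v \<in> fst G"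
  obtains B where "B \<in> blocks G" "v \<in> fst B"
proof -
  let ?S = "{B. subdigraph B G \<and> nonseparable B}"
  have "?S \<subseteq> Pow (fst G) \<times> Pow (snd G)"
    by (auto simp: subdigraph_def)
  then have "finite ?S"
    by (rule finite_subset) (simp add: assms(2) finite_edges[OF assms(1,2)])
  moreover have "({v}, {}) \<in> ?S"
    using assms(3) by (simp add: subdigraph_def wf_dgraph_def nonseparable_def conn_def)
  ultimately obtain B where B: "B \<in> ?S" "({v}, {}) \<le> B"
    and max: "\<forall>B'\<in>?S. B \<le> B' \<longrightarrow> B = B'"
    using finite_has_maximal2 by blast
  have "B \<in> blocks G"
  proof (rule blockI[OF assms(2)])
    show "subdigraph B G" "nonseparable B"
      using B(1) by simp_all
    fix B' assume "subdigraph B' G" "nonseparable B'" "B \<le> B'"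
    then show "B' = B"
      using max[rule_format, of B'] by simp
  qed
  moreover have "v \<in> fst B"
    using B(2) by (simp add: less_eq_prod_def)
  ultimately show thesis
    by (rule that)
qed

lemma block_not_singleton:
  assumes "finite (fst G)" "A \<in> blocks G" "A' \<in> blocks G" "A \<noteq> A'" "v \<in> fst A'"
  shows "fst A \<noteq> {v}"
proof
  assume "fst A = {v}"
  then have "induced_on G (fst A) \<le> induced_on G (fst A')"
    using assms(5) by (intro induced_on_mono) simp
  then have "A \<le> A'"
    by (simp only: block_eq_induced_on[OF assms(1,2), symmetric] block_eq_induced_on[OF assms(1,3), symmetric])
  then have "A' = A"
    using block_maximal[OF assms(1,2) blockD[OF assms(1,3)]] by simp
  with assms(4) show False
    by simp
qed

lemma nonseparable_rtrancl_delete_vertex: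
  assumes "wf_dgraph B" "nonseparable B" "snd B \<subseteq> snd U"
    and "a \<in> fst B" "b \<in> fst B" "a \<noteq> w" "b \<noteq> w"
  shows "(a, b) \<in> (adj (delete_vertex w U))\<^sup>*"
proof -
  have "(a, b) \<in> (adj (delete_vertex w B))\<^sup>*"
    using connD[OF nonseparable_conn_delete_vertex[OF assms(1,2)]] assms(4-7) by simp
  then show ?thesis
    using adj_rtrancl_mono[OF snd_delete_vertex_mono[OF assms(3)]] by blast
qed

lemma path_reaches_an_end_delete_vertex:
  assumes "is_path H xs" "\<And>a b. a \<in> set xs \<Longrightarrow> b \<in> set xs \<Longrightarrow> (a, b) \<in> adj H \<Longrightarrow> (a, b) \<in> adj U"
    and "u \<in> set xs" "u \<noteq> w"
  shows "(hd xs, u) \<in> (adj (delete_vertex w U))\<^sup>* \<or> (u, last xs) \<in> (adj (delete_vertex w U))\<^sup>*"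
proof (rule successively_reaches_an_end[OF _ _ assms(3,4)])
  show "successively (\<lambda>a b. (a, b) \<in> adj H) xs" "distinct xs"
    using assms(1) unfolding is_path_iff_successively by simp_all
  fix a b assume "a \<in> set xs" "b \<in> set xs" "(a, b) \<in> adj H" "a \<noteq> w" "b \<noteq> w"
  then show "(a, b) \<in> adj (delete_vertex w U)"
    using assms(2) by (simp add: adj_delete_vertex)
qed

lemma path_avoiding_rtrancl_delete_vertex:
  assumes "is_path H xs" "\<And>a b. a \<in> set xs \<Longrightarrow> b \<in> set xs \<Longrightarrow> (a, b) \<in> adj H \<Longrightarrow> (a, b) \<in> adj U"
    and "w \<notin> set xs"
  shows "(hd xs, last xs) \<in> (adj (delete_vertex w U))\<^sup>*"
proof -
  have "successively (\<lambda>a b. (a, b) \<in> adj H) xs" "xs \<noteq> []"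
    using assms(1) unfolding is_path_iff_successively by simp_all
  then have "successively (\<lambda>a b. (a, b) \<in> adj (delete_vertex w U)) xs"
    using assms(2,3) by (elim successively_mono) (auto simp: adj_delete_vertex)
  then show ?thesis
    using successively_imp_rtrancl \<open>xs \<noteq> []\<close> by blast
qed

(* Deleting v leaves B1 - v and B2 - v joined by the path; deleting any other vertex w leaves
   B1 - w and B2 - w joined at v, and every remaining path vertex joined to an end of the path. *)
context
  fixes G B1 B2 :: "'a dgraph" and v :: 'a and xs :: "'a list"
  assumes B1: "subdigraph B1 G" "nonseparable B1" and B2: "subdigraph B2 G" "nonseparable B2"
    and v: "v \<in> fst B1" "v \<in> fst B2"
    and xs: "is_path (delete_vertex v G) xs" "hd xs \<in> fst B1" "last xs \<in> fst B2"
begin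

lemma glued_graph_basics:
  defines "U \<equiv> induced_on G (fst B1 \<union> fst B2 \<union> set xs)"
  shows "wf_dgraph U" "fst U = fst B1 \<union> fst B2 \<union> set xs" "snd B1 \<subseteq> snd U" "snd B2 \<subseteq> snd U"
    and "v \<notin> set xs" "hd xs \<noteq> v" "last xs \<noteq> v"
    and "\<And>a b. a \<in> set xs \<Longrightarrow> b \<in> set xs \<Longrightarrow> (a, b) \<in> adj (delete_vertex v G) \<Longrightarrow> (a, b) \<in> adj U"
proof -
  have "xs \<noteq> []" "set xs \<subseteq> fst G - {v}"
    using xs(1) unfolding is_path_def by auto
  then show "v \<notin> set xs" "hd xs \<noteq> v" "last xs \<noteq> v"
    using hd_in_set last_in_set by blast+
  show "wf_dgraph U" "fst U = fst B1 \<union> fst B2 \<union> set xs"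
    unfolding U_def induced_on_def wf_dgraph_def by auto
  show "snd B1 \<subseteq> snd U" "snd B2 \<subseteq> snd U"
    using B1(1) B2(1) unfolding U_def induced_on_def subdigraph_def wf_dgraph_def by auto
  show "(a, b) \<in> adj U" if "a \<in> set xs" "b \<in> set xs" "(a, b) \<in> adj (delete_vertex v G)" for a b
    using that unfolding U_def adj_induced_on adj_delete_vertex by auto
qed

lemma glue_conn_delete_shared_vertex:
  "conn (delete_vertex v (induced_on G (fst B1 \<union> fst B2 \<union> set xs)))"
proof (rule connI[where h = "hd xs"])
  let ?U = "induced_on G (fst B1 \<union> fst B2 \<union> set xs)"
  let ?R = "(adj (delete_vertex v ?U))\<^sup>*"
  note U = glued_graph_basics
  have xy: "(hd xs, last xs) \<in> ?R"
    by (rule path_avoiding_rtrancl_delete_vertex[OF xs(1) U(8) U(5)])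
  fix u assume u: "u \<in> fst (delete_vertex v ?U)"
  then consider "u \<in> fst B1" | "u \<in> fst B2" | "u \<in> set xs" and "u \<noteq> v"
    using U(2) by auto
  then show "(hd xs, u) \<in> ?R"
  proof cases
    case 1
    then show ?thesis
      using u xs(2) U(6)
      by (intro nonseparable_rtrancl_delete_vertex[OF wf_subdigraph[OF B1(1)] B1(2) U(3)]) auto
  next
    case 2
    then have "(last xs, u) \<in> ?R"
      using u xs(3) U(7)
      by (intro nonseparable_rtrancl_delete_vertex[OF wf_subdigraph[OF B2(1)] B2(2) U(4)]) auto
    with xy show ?thesis
      by (rule rtrancl_trans)
  next
    case 3
    with path_reaches_an_end_delete_vertex[OF xs(1) U(8)] consider
      "(hd xs, u) \<in> ?R" | "(u, last xs) \<in> ?R"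
      by blast
    then show ?thesis
    proof cases
      case 2
      from xy adj_rtrancl_sym[OF 2] show ?thesis
        by (rule rtrancl_trans)
    qed
  qed
qed

lemma glue_conn_delete_other_vertex:
  assumes "w \<noteq> v"
  shows "conn (delete_vertex w (induced_on G (fst B1 \<union> fst B2 \<union> set xs)))"
proof (rule connI[where h = v])
  let ?U = "induced_on G (fst B1 \<union> fst B2 \<union> set xs)"
  let ?R = "(adj (delete_vertex w ?U))\<^sup>*"
  note U = glued_graph_basics
  have in_B1: "(v, a) \<in> ?R" if "a \<in> fst B1" "a \<noteq> w" for a
    using that v(1) assms
    by (intro nonseparable_rtrancl_delete_vertex[OF wf_subdigraph[OF B1(1)] B1(2) U(3)]) auto
  have in_B2: "(v, a) \<in> ?R" if "a \<in> fst B2" "a \<noteq> w" for a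
    using that v(2) assms
    by (intro nonseparable_rtrancl_delete_vertex[OF wf_subdigraph[OF B2(1)] B2(2) U(4)]) auto
  fix u assume u: "u \<in> fst (delete_vertex w ?U)"
  have reached: "a \<noteq> w" if "(u, a) \<in> ?R" for a
    using adj_rtrancl_in_verts[OF wf_delete_vertex[OF U(1)] that u] by simp
  consider "u \<in> fst B1" | "u \<in> fst B2" | "u \<in> set xs" and "u \<noteq> w"
    using u U(2) by auto
  then show "(v, u) \<in> ?R"
  proof cases
    case 3
    with path_reaches_an_end_delete_vertex[OF xs(1) U(8)] consider
      "(hd xs, u) \<in> ?R" | "(u, last xs) \<in> ?R"
      by blast
    then show ?thesis
    proof cases
      case 1
      have "(v, hd xs) \<in> ?R"
        using in_B1[OF xs(2) reached[OF adj_rtrancl_sym[OF 1]]] .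
      from this 1 show ?thesis
        by (rule rtrancl_trans)
    next
      case 2
      have "(v, last xs) \<in> ?R"
        using in_B2[OF xs(3) reached[OF 2]] .
      from this adj_rtrancl_sym[OF 2] show ?thesis
        by (rule rtrancl_trans)
    qed
  qed (use u in_B1 in_B2 in auto)
qed

lemma nonseparable_glue: "nonseparable (induced_on G (fst B1 \<union> fst B2 \<union> set xs))"
proof -
  let ?U = "induced_on G (fst B1 \<union> fst B2 \<union> set xs)"
  note U = glued_graph_basics
  have conn_delete: "conn (delete_vertex w ?U)" for w
    using glue_conn_delete_shared_vertex glue_conn_delete_other_vertex by (cases "w = v") auto
  have "conn ?U"
  proof (rule connI[where h = "hd xs"])
    fix u assume u: "u \<in> fst ?U"
    show "(hd xs, u) \<in> (adj ?U)\<^sup>*"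
    proof (cases "u = v")
      case True
      have "conn B1"
        using B1(2) unfolding nonseparable_def by simp
      then have "(hd xs, v) \<in> (adj B1)\<^sup>*"
        using xs(2) v(1) by (rule connD)
      then show ?thesis
        using True adj_rtrancl_mono[OF U(3)] by auto
    next
      case False
      have "(hd xs, u) \<in> (adj (delete_vertex v ?U))\<^sup>*"
        by (rule connD[OF conn_delete]) (use u False xs(2) U(2,6) in auto)
      then show ?thesis
        using delete_vertex_rtrancl_subset[of v ?U] by blast
    qed
  qed
  then show ?thesis
    using conn_delete unfolding nonseparable_def by blast
qed

end

lemma path_between_blocks_avoiding_non_cut_vertex:
  assumes wf: "wf_dgraph G" and fin: "finite (fst G)" and nc: "\<not> is_cut_vertex G v"
    and B1: "B1 \<in> blocks G" "v \<in> fst B1" and B2: "B2 \<in> blocks G" "v \<in> fst B2"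
    and ne: "B1 \<noteq> B2"
  obtains xs where "is_path (delete_vertex v G) xs" "hd xs \<in> fst B1" "last xs \<in> fst B2"
proof -
  note b1 = blockD[OF fin B1(1)] and b2 = blockD[OF fin B2(1)]
  obtain x where x: "x \<in> fst B1" "x \<noteq> v"
    using block_not_singleton[OF fin B1(1) B2(1) ne B2(2)] B1(2) by blast
  obtain y where y: "y \<in> fst B2" "y \<noteq> v"
    using block_not_singleton[OF fin B2(1) B1(1) ne[symmetric] B1(2)] B2(2) by blast
  have "conn B1" "conn B2" "snd B1 \<subseteq> snd G" "snd B2 \<subseteq> snd G"
    using b1 b2 unfolding nonseparable_def subdigraph_def by simp_all
  then have "(x, v) \<in> (adj G)\<^sup>*" "(v, y) \<in> (adj G)\<^sup>*"
    using connD x(1) y(1) B1(2) B2(2) adj_rtrancl_mono by (metis subsetD)+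
  then have "(x, y) \<in> (adj G)\<^sup>*"
    by (rule rtrancl_trans)
  moreover have xG: "x \<in> fst G"
    using b1(1) x(1) unfolding subdigraph_def by auto
  ultimately have "(x, y) \<in> (adj (delete_vertex v G))\<^sup>*"
    by (rule rtrancl_delete_non_cut_vertex[OF wf fin nc _ x(2) y(2), rotated])
  moreover have "x \<in> fst (delete_vertex v G)"
    using xG x(2) by simp
  ultimately show thesis
    using rtrancl_imp_path[OF _ wf_delete_vertex[OF wf]] x(1) y(1) that by blast
qed

lemma block_unique_at_non_cut_vertex:
  assumes wf: "wf_dgraph G" and fin: "finite (fst G)" and nc: "\<not> is_cut_vertex G v"
    and B1: "B1 \<in> blocks G" "v \<in> fst B1" and B2: "B2 \<in> blocks G" "v \<in> fst B2"
  shows "B1 = B2"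
proof (rule ccontr)
  assume "B1 \<noteq> B2"
  then obtain xs where xs: "is_path (delete_vertex v G) xs" "hd xs \<in> fst B1" "last xs \<in> fst B2"
    using path_between_blocks_avoiding_non_cut_vertex[OF assms] by blast
  define U where "U = induced_on G (fst B1 \<union> fst B2 \<union> set xs)"
  note b1 = blockD[OF fin B1(1)] and b2 = blockD[OF fin B2(1)]
  have "subdigraph U G"
    unfolding U_def using b1(1) b2(1) xs(1)
    by (intro subdigraph_induced_on) (auto simp: subdigraph_def is_path_def)
  moreover have "nonseparable U"
    unfolding U_def by (rule nonseparable_glue[OF b1 b2 B1(2) B2(2) xs])
  moreover have "induced_on G (fst B1) \<le> U" "induced_on G (fst B2) \<le> U"
    unfolding U_def by (auto intro: induced_on_mono)
  then have "B1 \<le> U" "B2 \<le> U"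
    by (simp_all only: block_eq_induced_on[OF fin B1(1), symmetric]
        block_eq_induced_on[OF fin B2(1), symmetric])
  ultimately have "U = B1" "U = B2"
    using block_maximal[OF fin B1(1)] block_maximal[OF fin B2(1)] by blast+
  with \<open>B1 \<noteq> B2\<close> show False
    by simp
qed

lemma cut_index_non_cut_vertex:
  assumes "wf_dgraph G" "finite (fst G)" "v \<in> fst G" "\<not> is_cut_vertex G v"
  shows "cut_index G v = 1"
proof -
  obtain B where B: "B \<in> blocks G" "v \<in> fst B"
    using block_exists[OF assms(1-3)] .
  have "{B' \<in> blocks G. v \<in> fst B'} = {B}"
  proof (intro equalityI subsetI)
    fix B' assume "B' \<in> {B' \<in> blocks G. v \<in> fst B'}"
    then have "B' \<in> blocks G" "v \<in> fst B'"
      by simp_all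
    from block_unique_at_non_cut_vertex[OF assms(1,2,4) this B] show "B' \<in> {B}"
      by simp
  qed (use B in simp)
  then show ?thesis
    unfolding cut_index_def by simp
qed

section \<open>Counting B-partitions\<close>

definition subordinate_partitions :: "'i set \<Rightarrow> ('i \<Rightarrow> 'a set) \<Rightarrow> 'a set \<Rightarrow> ('i \<Rightarrow> 'a set) set" where
  "subordinate_partitions I A V =
     {S \<in> extensional I. (\<forall>i\<in>I. S i \<subseteq> A i) \<and> disjoint_family_on S I \<and> (\<Union>i\<in>I. S i) = V}"

definition partition_of_choice :: "'i set \<Rightarrow> 'a set \<Rightarrow> ('a \<Rightarrow> 'i) \<Rightarrow> 'i \<Rightarrow> 'a set" where
  "partition_of_choice I V f = (\<lambda>i\<in>I. {v \<in> V. f v = i})"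

definition choice_of_partition :: "'a set \<Rightarrow> 'i set \<Rightarrow> ('i \<Rightarrow> 'a set) \<Rightarrow> 'a \<Rightarrow> 'i" where
  "choice_of_partition V I S = (\<lambda>v\<in>V. THE i. i \<in> I \<and> v \<in> S i)"

lemma subordinate_partitionsD:
  assumes "S \<in> subordinate_partitions I A V"
  shows "S \<in> extensional I" "i \<in> I \<Longrightarrow> S i \<subseteq> A i" "i \<in> I \<Longrightarrow> S i \<subseteq> V"
    and "v \<in> V \<Longrightarrow> \<exists>i\<in>I. v \<in> S i"
    and "i \<in> I \<Longrightarrow> j \<in> I \<Longrightarrow> v \<in> S i \<Longrightarrow> v \<in> S j \<Longrightarrow> i = j"
  using assms unfolding subordinate_partitions_def disjoint_family_on_def by blast+

lemma choice_of_partition_eq: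
  assumes "S \<in> subordinate_partitions I A V" "i \<in> I" "v \<in> S i"
  shows "choice_of_partition V I S v = i"
proof -
  have "(THE i. i \<in> I \<and> v \<in> S i) = i"
    using assms subordinate_partitionsD(5)[OF assms(1)] by (intro the_equality) blast+
  then show ?thesis
    using assms subordinate_partitionsD(3)[OF assms(1,2)] unfolding choice_of_partition_def by auto
qed

lemma partition_of_choice_in_subordinate_partitions:
  "f \<in> (\<Pi>\<^sub>E v\<in>V. {i \<in> I. v \<in> A i}) \<Longrightarrow> partition_of_choice I V f \<in> subordinate_partitions I A V"
  unfolding subordinate_partitions_def partition_of_choice_def disjoint_family_on_def by auto

lemma choice_of_partition_in_PiE:
  assumes "S \<in> subordinate_partitions I A V"
  shows "choice_of_partition V I S \<in> (\<Pi>\<^sub>E v\<in>V. {i \<in> I. v \<in> A i})"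
proof -
  have "choice_of_partition V I S v \<in> {i \<in> I. v \<in> A i}" if v: "v \<in> V" for v
  proof -
    obtain i where "i \<in> I" "v \<in> S i"
      using subordinate_partitionsD(4)[OF assms v] by blast
    then show ?thesis
      using choice_of_partition_eq[OF assms] subordinate_partitionsD(2)[OF assms] by auto
  qed
  moreover have "choice_of_partition V I S \<in> extensional V"
    unfolding choice_of_partition_def by simp
  ultimately show ?thesis
    by (simp add: PiE_iff)
qed

lemma choice_of_partition_of_choice:
  assumes "f \<in> (\<Pi>\<^sub>E v\<in>V. {i \<in> I. v \<in> A i})"
  shows "choice_of_partition V I (partition_of_choice I V f) = f"
proof (rule extensionalityI)
  show "choice_of_partition V I (partition_of_choice I V f) \<in> extensional V" "f \<in> extensional V"
    using assms unfolding choice_of_partition_def by (auto simp: PiE_iff)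
  fix v assume "v \<in> V"
  then show "choice_of_partition V I (partition_of_choice I V f) v = f v"
    using assms
    by (intro choice_of_partition_eq[OF partition_of_choice_in_subordinate_partitions[OF assms]])
       (auto simp: partition_of_choice_def)
qed

lemma partition_of_choice_of_partition:
  assumes "S \<in> subordinate_partitions I A V"
  shows "partition_of_choice I V (choice_of_partition V I S) = S"
proof (rule extensionalityI)
  show "partition_of_choice I V (choice_of_partition V I S) \<in> extensional I" "S \<in> extensional I"
    using subordinate_partitionsD(1)[OF assms] unfolding partition_of_choice_def by auto
  fix i assume i: "i \<in> I"
  have "v \<in> S i" if "v \<in> V" "choice_of_partition V I S v = i" for v
  proof -
    obtain j where "j \<in> I" "v \<in> S j"
      using subordinate_partitionsD(4)[OF assms \<open>v \<in> V\<close>] by blast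
    with that(2) show ?thesis
      using choice_of_partition_eq[OF assms] by auto
  qed
  then show "partition_of_choice I V (choice_of_partition V I S) i = S i"
    using i subordinate_partitionsD(3)[OF assms i] choice_of_partition_eq[OF assms i]
    unfolding partition_of_choice_def by auto
qed

lemma card_subordinate_partitions:
  assumes "finite V"
  shows "card (subordinate_partitions I A V) = (\<Prod>v\<in>V. card {i \<in> I. v \<in> A i})"
proof -
  have "bij_betw (partition_of_choice I V) (\<Pi>\<^sub>E v\<in>V. {i \<in> I. v \<in> A i}) (subordinate_partitions I A V)"
    by (rule bij_betw_byWitness[where f' = "choice_of_partition V I"])
      (simp_all add: image_subset_iff choice_of_partition_of_choice partition_of_choice_of_partition
        partition_of_choice_in_subordinate_partitions choice_of_partition_in_PiE)
  then have "card (\<Pi>\<^sub>E v\<in>V. {i \<in> I. v \<in> A i}) = card (subordinate_partitions I A V)"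
    by (rule bij_betw_same_card)
  then show ?thesis
    using assms by (simp add: card_PiE)
qed

lemma induced_subdigraph_iff: "induced_subdigraph H G \<longleftrightarrow> fst H \<subseteq> fst G \<and> induced_on G (fst H) = H"
  unfolding induced_subdigraph_def subdigraph_def wf_dgraph_def induced_on_def
  by (cases H) auto

lemma block_induced_on:
  assumes "finite (fst G)" "B \<in> blocks G" "T \<subseteq> fst B"
  shows "induced_on B T = induced_on G T"
proof -
  have "induced_on B T = induced_on (induced_on G (fst B)) T"
    using block_eq_induced_on[OF assms(1,2)] by (rule arg_cong)
  also have "\<dots> = induced_on G T"
    using assms(3) unfolding induced_on_def by auto
  finally show ?thesis .
qed

lemma B_partitions_eq_image:
  assumes fin: "finite (fst G)"
  shows "{P. is_B_partition G P} =
    (\<lambda>S. \<lambda>B\<in>blocks G. induced_on G (S B)) ` subordinate_partitions (blocks G) fst (fst G)"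
proof (intro equalityI subsetI)
  fix P assume "P \<in> {P. is_B_partition G P}"
  then have P: "P \<in> extensional (blocks G)"
    "\<And>B. B \<in> blocks G \<Longrightarrow> induced_subdigraph (P B) G \<and> induced_subdigraph (P B) B"
    "disjoint_family_on (fst \<circ> P) (blocks G)" "(\<Union>B\<in>blocks G. fst (P B)) = fst G"
    unfolding is_B_partition_def disjoint_family_on_def by auto
  define S where "S = (\<lambda>B\<in>blocks G. fst (P B))"
  have "S \<in> subordinate_partitions (blocks G) fst (fst G)"
    using P(2,3,4) unfolding S_def subordinate_partitions_def disjoint_family_on_def
    by (auto simp: induced_subdigraph_iff)
  moreover have "P = (\<lambda>B\<in>blocks G. induced_on G (S B))"
  proof (rule extensionalityI[OF P(1)])
    fix B assume "B \<in> blocks G"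
    then show "P B = (\<lambda>B\<in>blocks G. induced_on G (S B)) B"
      using P(2) unfolding S_def induced_subdigraph_iff by simp
  qed simp
  ultimately show "P \<in> (\<lambda>S. \<lambda>B\<in>blocks G. induced_on G (S B)) ` subordinate_partitions (blocks G) fst (fst G)"
    by blast
next
  fix P assume "P \<in> (\<lambda>S. \<lambda>B\<in>blocks G. induced_on G (S B)) ` subordinate_partitions (blocks G) fst (fst G)"
  then obtain S where S: "S \<in> subordinate_partitions (blocks G) fst (fst G)"
    and P: "P = (\<lambda>B\<in>blocks G. induced_on G (S B))"
    by blast
  have "induced_subdigraph (P B) G \<and> induced_subdigraph (P B) B" if B: "B \<in> blocks G" for B
  proof -
    have "S B \<subseteq> fst B" "fst B \<subseteq> fst G"
      using S B blockD(1)[OF fin B] unfolding subordinate_partitions_def subdigraph_def by auto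
    then show ?thesis
      using block_induced_on[OF fin B] B unfolding P induced_subdigraph_iff by auto
  qed
  moreover have "disjoint_family_on S (blocks G)" "(\<Union>B\<in>blocks G. S B) = fst G"
    using S unfolding subordinate_partitions_def by auto
  ultimately show "P \<in> {P. is_B_partition G P}"
    unfolding is_B_partition_def P disjoint_family_on_def by auto
qed

lemma inj_on_induced_parts: "inj_on (\<lambda>S. \<lambda>B\<in>I. induced_on G (S B)) (extensional I)"
proof (rule inj_onI)
  fix S S' assume S: "S \<in> extensional I" "S' \<in> extensional I"
    and eq: "(\<lambda>B\<in>I. induced_on G (S B)) = (\<lambda>B\<in>I. induced_on G (S' B))"
  show "S = S'"
  proof (rule extensionalityI[OF S])
    fix B assume "B \<in> I"
    then show "S B = S' B"
      using fun_cong[OF eq, of B] by (metis fst_induced_on restrict_apply')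
  qed
qed

lemma card_B_partitions:
  assumes "finite (fst G)"
  shows "card {P. is_B_partition G P} = (\<Prod>v\<in>fst G. cut_index G v)"
proof -
  have "inj_on (\<lambda>S. \<lambda>B\<in>blocks G. induced_on G (S B)) (subordinate_partitions (blocks G) fst (fst G))"
    by (rule inj_on_subset[OF inj_on_induced_parts]) (auto simp: subordinate_partitions_def)
  then have "card {P. is_B_partition G P} = card (subordinate_partitions (blocks G) fst (fst G))"
    unfolding B_partitions_eq_image[OF assms] by (rule card_image)
  also have "\<dots> = (\<Prod>v\<in>fst G. cut_index G v)"
    using assms unfolding cut_index_def by (rule card_subordinate_partitions)
  finally show ?thesis .
qed

theorem mainTheorem1:
  fixes G :: "'a dgraph"
  assumes "finite (fst G)" and "wf_dgraph G"
  shows "card {P. is_B_partition G P} = (\<Prod>v\<in>cut_vertices G. cut_index G v)"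
proof -
  have "(\<Prod>v\<in>fst G. cut_index G v) = (\<Prod>v\<in>cut_vertices G. cut_index G v)"
  proof (rule prod.mono_neutral_right)
    show "cut_vertices G \<subseteq> fst G"
      unfolding cut_vertices_def is_cut_vertex_def by auto
    show "\<forall>v\<in>fst G - cut_vertices G. cut_index G v = 1"
      using cut_index_non_cut_vertex[OF assms(2,1)] unfolding cut_vertices_def by auto
  qed (fact assms(1))
  then show ?thesis
    using card_B_partitions[OF assms(1)] by simp
qed

end
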